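(* Let $(\mu,b)$ be a stable configuration under perfect observability for the objective game $G$. Then $\pi(b(\theta))=\pi(b(\theta'))$ for all $\theta,\theta'\in\operatorname{supp}\mu$.
   Context: Objective game: $G=(N,A,\pi)$ is a finite $n$-player normal-form game, $N=\{1,\dots,n\}$, finite action sets $A_i$, $A=\prod_{i\in N}A_i$, material payoff (fitness) functions $\pi_i:A\to\mathbb{R}$, extended multilinearly to mixed profiles in $\prod_{i}\Delta(A_i)$; $\pi=(\pi_1,\dots,\pi_n)$. Preference types: $\Theta=\mathbb{R}^A$ (utility functions on $A$, extended multilinearly to mixed profiles). $\mathcal{M}(\Theta^n)$ is the set of product distributions $\mu=\mu_1\times\dots\times\mu_n$ on $\Theta^n$ with each $\mu_i$ finitely supported; $\operatorname{supp}\mu=\prod_i\operatorname{supp}\mu_i$, $\mu_{-i}(\theta_{-i})=\prod_{j\neq i}\mu_j(\theta_j)$. Mutants: for nonempty $J\subseteq N$, a mutant sub-profile is $\tilde\theta_J\in\prod_{j\in J}(\Theta\setminus\operatorname{supp}\mu_j)$ with shares $\varepsilon=(\varepsilon_j)_{j\in J}\in(0,1)^{|J|}$, $\|\varepsilon\|=\max_j\varepsilon_j$; the post-entry distribution $\tilde\mu^\varepsilon$ has $\tilde\mu^\varepsilon_i=(1-\varepsilon_i)\mu_i+\varepsilon_i\delta_{\tilde\theta_i}$ for $i\in J$ and $\tilde\mu^\varepsilon_i=\mu_i$ otherwise. Perfect observability: for $\mu\in\mathcal M(\Theta^n)$, an equilibrium is a map $b:\operatorname{supp}\mu\to\prod_i\Delta(A_i)$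 such that for each $\theta$, $b(\theta)$ is a Nash equilibrium of the normal-form game with action sets $A_i$ and payoffs $\theta_1,\dots,\theta_n$; $B_1(\mu)$ is the set of these; $(\mu,b)$ with $b\in B_1(\mu)$ is a configuration. Average fitness of $\theta_i\in\operatorname{supp}\mu_i$: $\Pi_{\theta_i}(\mu;b)=\sum_{\theta'_{-i}\in\operatorname{supp}\mu_{-i}}\mu_{-i}(\theta'_{-i})\pi_i(b(\theta_i,\theta'_{-i}))$. $(\mu,b)$ is balanced if for each $i$ all types in $\operatorname{supp}\mu_i$ have equal average fitness. Focal set: $B_1(\tilde\mu^\varepsilon;b)=\{\tilde b\in B_1(\tilde\mu^\varepsilon):\tilde b(\theta)=b(\theta)\ \forall\theta\in\operatorname{supp}\mu\}$. $(\mu,b)$ is stable if it is balanced and for every nonempty $J\subseteq N$ and every mutant sub-profile $\tilde\theta_J$ there is $\bar\epsilon\in(0,1)$ such that for every $\varepsilon\in(0,1)^{|J|}$ with $\|\varepsilon\|<\bar\epsilon$ and every $\tilde b\in B_1(\tilde\mu^\varepsilon;b)$, either (i) there is $j\in J$ with $\Pi_{\theta_j}(\tilde\mu^\varepsilon;\tilde b)>\Pi_{\tilde\theta_j}(\tilde\mu^\varepsilon;\tilde b)$ for all $\theta_j\in\operatorname{supp}\mu_j$, or (ii) for every $i\in N$ all types in $\operatorname{supp}\tilde\mu^\varepsilon_i$ have equal average fitness under $(\tilde\mu^\varepsilon,\tilde b)$. *)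

theory Defs
  imports Complex_Main "HOL-Library.FuncSet"
begin

definition profiles :: "('p \<Rightarrow> 'a set) \<Rightarrow> ('p \<Rightarrow> 'a) set" where
  "profiles Act = PiE UNIV Act"

definition mixed_strategy :: "('p \<Rightarrow> 'a set) \<Rightarrow> 'p \<Rightarrow> ('a \<Rightarrow> real) \<Rightarrow> bool" where
  "mixed_strategy Act i s \<longleftrightarrow>
     (\<forall>a. 0 \<le> s a) \<and> (\<forall>a. a \<notin> Act i \<longrightarrow> s a = 0) \<and> sum s (Act i) = 1"

definition mixed_profile :: "('p \<Rightarrow> 'a set) \<Rightarrow> ('p \<Rightarrow> 'a \<Rightarrow> real) \<Rightarrow> bool" where
  "mixed_profile Act \<sigma> \<longleftrightarrow> (\<forall>i. mixed_strategy Act i (\<sigma> i))"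

definition EU :: "('p::finite \<Rightarrow> 'a set) \<Rightarrow> (('p \<Rightarrow> 'a) \<Rightarrow> real) \<Rightarrow> ('p \<Rightarrow> 'a \<Rightarrow> real) \<Rightarrow> real" where
  "EU Act u \<sigma> = (\<Sum>a\<in>profiles Act. (\<Prod>i\<in>UNIV. \<sigma> i (a i)) * u a)"

definition is_NE :: "('p::finite \<Rightarrow> 'a set) \<Rightarrow> ('p \<Rightarrow> ('p \<Rightarrow> 'a) \<Rightarrow> real) \<Rightarrow> ('p \<Rightarrow> 'a \<Rightarrow> real) \<Rightarrow> bool" where
  "is_NE Act \<theta> \<sigma> \<longleftrightarrow> mixed_profile Act \<sigma> \<and>
     (\<forall>i s. mixed_strategy Act i s \<longrightarrow> EU Act (\<theta> i) (\<sigma>(i := s)) \<le> EU Act (\<theta> i) \<sigma>)"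

text \<open>The type space \<Theta> = R^A: utility functions on A (normalised to 0 outside A,
so that each element of R^A has exactly one representative).\<close>
definition Theta :: "('p \<Rightarrow> 'a set) \<Rightarrow> (('p \<Rightarrow> 'a) \<Rightarrow> real) set" where
  "Theta Act = {u. \<forall>a. a \<notin> profiles Act \<longrightarrow> u a = 0}"

definition supp :: "('t \<Rightarrow> real) \<Rightarrow> 't set" where
  "supp m = {t. m t \<noteq> 0}"

definition type_dist :: "('p \<Rightarrow> 'a set) \<Rightarrow> ('p \<Rightarrow> (('p \<Rightarrow> 'a) \<Rightarrow> real) \<Rightarrow> real) \<Rightarrow> bool" where
  "type_dist Act \<mu> \<longleftrightarrow> (\<forall>i. finite (supp (\<mu> i)) \<and> supp (\<mu> i) \<subseteq> Theta Act \<and>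
     (\<forall>t. 0 \<le> \<mu> i t) \<and> sum (\<mu> i) (supp (\<mu> i)) = 1)"

definition supp_prof :: "('p \<Rightarrow> 't \<Rightarrow> real) \<Rightarrow> ('p \<Rightarrow> 't) set" where
  "supp_prof \<mu> = {\<theta>. \<forall>i. \<theta> i \<in> supp (\<mu> i)}"

definition B1 :: "('p::finite \<Rightarrow> 'a set) \<Rightarrow> ('p \<Rightarrow> (('p \<Rightarrow> 'a) \<Rightarrow> real) \<Rightarrow> real)
    \<Rightarrow> (('p \<Rightarrow> ('p \<Rightarrow> 'a) \<Rightarrow> real) \<Rightarrow> 'p \<Rightarrow> 'a \<Rightarrow> real) set" where
  "B1 Act \<mu> = {b. \<forall>\<theta>\<in>supp_prof \<mu>. is_NE Act \<theta> (b \<theta>)}"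

text \<open>Average fitness of type t of player i: sum over opponents' type profiles
\<theta>'_{-i} in supp \<mu>_{-i}, represented as full profiles \<theta>' with \<theta>' i = t.\<close>
definition avg_fit :: "('p::finite \<Rightarrow> 'a set) \<Rightarrow> ('p \<Rightarrow> ('p \<Rightarrow> 'a) \<Rightarrow> real)
    \<Rightarrow> ('p \<Rightarrow> (('p \<Rightarrow> 'a) \<Rightarrow> real) \<Rightarrow> real)
    \<Rightarrow> (('p \<Rightarrow> ('p \<Rightarrow> 'a) \<Rightarrow> real) \<Rightarrow> 'p \<Rightarrow> 'a \<Rightarrow> real)
    \<Rightarrow> 'p \<Rightarrow> (('p \<Rightarrow> 'a) \<Rightarrow> real) \<Rightarrow> real" where
  "avg_fit Act \<pi> \<mu> b i t =
     (\<Sum>\<theta>'\<in>{\<theta>'. \<theta>' i = t \<and> (\<forall>j. j \<noteq> i \<longrightarrow> \<theta>' j \<in> supp (\<mu> j))}.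
        (\<Prod>j\<in>UNIV - {i}. \<mu> j (\<theta>' j)) * EU Act (\<pi> i) (b \<theta>'))"

definition balanced :: "('p::finite \<Rightarrow> 'a set) \<Rightarrow> ('p \<Rightarrow> ('p \<Rightarrow> 'a) \<Rightarrow> real)
    \<Rightarrow> ('p \<Rightarrow> (('p \<Rightarrow> 'a) \<Rightarrow> real) \<Rightarrow> real)
    \<Rightarrow> (('p \<Rightarrow> ('p \<Rightarrow> 'a) \<Rightarrow> real) \<Rightarrow> 'p \<Rightarrow> 'a \<Rightarrow> real) \<Rightarrow> bool" where
  "balanced Act \<pi> \<mu> b \<longleftrightarrow>
     (\<forall>i. \<forall>t\<in>supp (\<mu> i). \<forall>t'\<in>supp (\<mu> i). avg_fit Act \<pi> \<mu> b i t = avg_fit Act \<pi> \<mu> b i t')"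

definition post_entry :: "('p \<Rightarrow> 't \<Rightarrow> real) \<Rightarrow> 'p set \<Rightarrow> ('p \<Rightarrow> 't) \<Rightarrow> ('p \<Rightarrow> real)
    \<Rightarrow> 'p \<Rightarrow> 't \<Rightarrow> real" where
  "post_entry \<mu> J mt eps = (\<lambda>i t. if i \<in> J
      then (1 - eps i) * \<mu> i t + eps i * (if t = mt i then 1 else 0)
      else \<mu> i t)"

definition B1_focal :: "('p::finite \<Rightarrow> 'a set) \<Rightarrow> ('p \<Rightarrow> (('p \<Rightarrow> 'a) \<Rightarrow> real) \<Rightarrow> real)
    \<Rightarrow> ('p \<Rightarrow> (('p \<Rightarrow> 'a) \<Rightarrow> real) \<Rightarrow> real)
    \<Rightarrow> (('p \<Rightarrow> ('p \<Rightarrow> 'a) \<Rightarrow> real) \<Rightarrow> 'p \<Rightarrow> 'a \<Rightarrow> real)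
    \<Rightarrow> (('p \<Rightarrow> ('p \<Rightarrow> 'a) \<Rightarrow> real) \<Rightarrow> 'p \<Rightarrow> 'a \<Rightarrow> real) set" where
  "B1_focal Act \<mu>' \<mu> b = {b'\<in>B1 Act \<mu>'. \<forall>\<theta>\<in>supp_prof \<mu>. b' \<theta> = b \<theta>}"

definition stable :: "('p::finite \<Rightarrow> 'a set) \<Rightarrow> ('p \<Rightarrow> ('p \<Rightarrow> 'a) \<Rightarrow> real)
    \<Rightarrow> ('p \<Rightarrow> (('p \<Rightarrow> 'a) \<Rightarrow> real) \<Rightarrow> real)
    \<Rightarrow> (('p \<Rightarrow> ('p \<Rightarrow> 'a) \<Rightarrow> real) \<Rightarrow> 'p \<Rightarrow> 'a \<Rightarrow> real) \<Rightarrow> bool" where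
  "stable Act \<pi> \<mu> b \<longleftrightarrow> balanced Act \<pi> \<mu> b \<and>
     (\<forall>J mt. J \<noteq> {} \<longrightarrow> (\<forall>j\<in>J. mt j \<in> Theta Act - supp (\<mu> j)) \<longrightarrow>
       (\<exists>eb. 0 < eb \<and> eb < 1 \<and>
          (\<forall>eps. (\<forall>j\<in>J. 0 < eps j \<and> eps j < 1 \<and> eps j < eb) \<longrightarrow>
             (\<forall>b'\<in>B1_focal Act (post_entry \<mu> J mt eps) \<mu> b.
                (\<exists>j\<in>J. \<forall>t\<in>supp (\<mu> j).
                   avg_fit Act \<pi> (post_entry \<mu> J mt eps) b' j t >
                   avg_fit Act \<pi> (post_entry \<mu> J mt eps) b' j (mt j))
                \<or> balanced Act \<pi> (post_entry \<mu> J mt eps) b'))))"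

end

theory Submission
  imports Defs
begin

text \<open>A mutant type with constant utility is indifferent among all outcomes, so any strategy is a
  best reply for it and it can be made to play like any incumbent type. A mutant of
  player j imitating, against each opponent profile, the incumbent type of j that is best for j's
  fitness is at least as fit as every incumbent; stability leaves only the balanced alternative,
  so j's payoff cannot depend on which incumbent type j has. For another player i two mutants
  enter: one of i imitating \<open>\<theta> i\<close>, and one of j imitating \<open>t\<close>, except against the
  i-mutant, where it imitates the type of j that is best for i. By the first step the j-mutant is
  exactly as fit as \<open>t\<close>, and the i-mutant is at least as fit as \<open>\<theta> i\<close>; stability again forces
  equality, so i's payoff does not depend on j's type either. Changing one coordinate at a time
  connects any two profiles of the support.\<close>

definition const_type :: "('p \<Rightarrow> 'a set) \<Rightarrow> real \<Rightarrow> ('p \<Rightarrow> 'a) \<Rightarrow> real" where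
  "const_type Act c = (\<lambda>a. if a \<in> profiles Act then c else 0)"

lemma sum_prod_mixed_profile_eq_1:
  fixes Act :: "'p::finite \<Rightarrow> 'a set"
  assumes "\<And>i. finite (Act i)" and "mixed_profile Act \<sigma>"
  shows "(\<Sum>a\<in>profiles Act. \<Prod>i\<in>UNIV. \<sigma> i (a i)) = 1"
proof -
  have "(\<Sum>a\<in>profiles Act. \<Prod>i\<in>UNIV. \<sigma> i (a i)) = (\<Prod>i\<in>UNIV. \<Sum>x\<in>Act i. \<sigma> i x)"
    unfolding profiles_def using assms(1) by (subst prod_sum_PiE) auto
  also have "\<dots> = 1"
    using assms(2) unfolding mixed_profile_def mixed_strategy_def by simp
  finally show ?thesis .
qed

lemma EU_const_type:
  fixes Act :: "'p::finite \<Rightarrow> 'a set"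
  assumes "\<And>i. finite (Act i)" and "mixed_profile Act \<sigma>"
  shows "EU Act (const_type Act c) \<sigma> = c"
proof -
  have "EU Act (const_type Act c) \<sigma> = (\<Sum>a\<in>profiles Act. (\<Prod>i\<in>UNIV. \<sigma> i (a i)) * c)"
    unfolding EU_def const_type_def by (intro sum.cong) auto
  also have "\<dots> = c"
    using sum_prod_mixed_profile_eq_1[OF assms] by (simp add: sum_distrib_right[symmetric])
  finally show ?thesis .
qed

lemma is_NE_replace_by_const_types:
  fixes Act :: "'p::finite \<Rightarrow> 'a set"
  assumes "\<And>i. finite (Act i)" and "is_NE Act \<theta> \<sigma>"
    and "\<And>k. \<theta>' k \<noteq> \<theta> k \<Longrightarrow> \<exists>c. \<theta>' k = const_type Act c"
  shows "is_NE Act \<theta>' \<sigma>"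
  unfolding is_NE_def
proof (intro conjI allI impI)
  show \<sigma>: "mixed_profile Act \<sigma>"
    using assms(2) unfolding is_NE_def by simp
  fix i s
  assume s: "mixed_strategy Act i s"
  then have \<sigma>s: "mixed_profile Act (\<sigma>(i := s))"
    using \<sigma> unfolding mixed_profile_def by auto
  show "EU Act (\<theta>' i) (\<sigma>(i := s)) \<le> EU Act (\<theta>' i) \<sigma>"
  proof (cases "\<theta>' i = \<theta> i")
    case True
    then show ?thesis using assms(2) s unfolding is_NE_def by simp
  next
    case False
    then obtain c where "\<theta>' i = const_type Act c" using assms(3) by blast
    then show ?thesis using EU_const_type[OF assms(1) \<sigma>] EU_const_type[OF assms(1) \<sigma>s] by simp
  qed
qed

lemma const_type_in_Theta: "const_type Act c \<in> Theta Act"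
  unfolding const_type_def Theta_def by auto

lemma inj_const_type:
  assumes "\<And>i. Act i \<noteq> {}"
  shows "inj (const_type Act)"
proof
  fix c d
  assume eq: "const_type Act c = const_type Act d"
  obtain a where "a \<in> profiles Act"
    using assms unfolding profiles_def by (metis PiE_eq_empty_iff all_not_in_conv)
  with eq show "c = d" unfolding const_type_def by metis
qed

lemma fresh_const_type:
  assumes "\<And>i. Act i \<noteq> {}" and "finite F"
  obtains c where "const_type Act c \<notin> F"
proof -
  have "infinite (range (const_type Act))"
    using inj_const_type[of Act] assms(1) by (simp add: finite_image_iff infinite_UNIV_char_0)
  then have "range (const_type Act) - F \<noteq> {}"
    using assms(2) by (metis Diff_infinite_finite finite.emptyI)
  then show ?thesis using that by blast
qed

definition opp_profiles :: "('p \<Rightarrow> 't set) \<Rightarrow> 'p \<Rightarrow> 't \<Rightarrow> ('p \<Rightarrow> 't) set" where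
  "opp_profiles S i t = {\<theta>. \<theta> i = t \<and> (\<forall>j. j \<noteq> i \<longrightarrow> \<theta> j \<in> S j)}"

definition opp_weight :: "('p \<Rightarrow> 't \<Rightarrow> real) \<Rightarrow> 'p \<Rightarrow> ('p \<Rightarrow> 't) \<Rightarrow> real" where
  "opp_weight m i \<theta> = (\<Prod>j\<in>UNIV - {i}. m j (\<theta> j))"

lemma avg_fit_opp_profiles:
  "avg_fit Act \<pi> m b i t = (\<Sum>\<theta>\<in>opp_profiles (supp \<circ> m) i t. opp_weight m i \<theta> * EU Act (\<pi> i) (b \<theta>))"
  unfolding avg_fit_def opp_profiles_def opp_weight_def by simp

lemma avg_fit_switch_type:
  "avg_fit Act \<pi> m b i t' =
    (\<Sum>\<theta>\<in>opp_profiles (supp \<circ> m) i t. opp_weight m i \<theta> * EU Act (\<pi> i) (b (\<theta>(i := t'))))"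
proof -
  have bij: "bij_betw (\<lambda>\<theta>. \<theta>(i := t')) (opp_profiles (supp \<circ> m) i t) (opp_profiles (supp \<circ> m) i t')"
    by (rule bij_betwI[where g = "\<lambda>\<theta>. \<theta>(i := t)"]) (auto simp: opp_profiles_def)
  have weight: "opp_weight m i (\<theta>(i := t')) = opp_weight m i \<theta>" for \<theta>
    unfolding opp_weight_def by (intro prod.cong) auto
  have "avg_fit Act \<pi> m b i t' = (\<Sum>\<theta>\<in>opp_profiles (supp \<circ> m) i t'. opp_weight m i \<theta> * EU Act (\<pi> i) (b \<theta>))"
    by (rule avg_fit_opp_profiles)
  also have "\<dots> = (\<Sum>\<theta>\<in>opp_profiles (supp \<circ> m) i t.
      opp_weight m i (\<theta>(i := t')) * EU Act (\<pi> i) (b (\<theta>(i := t'))))"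
    by (rule sum.reindex_bij_betw[OF bij, symmetric])
  finally show ?thesis by (simp add: weight)
qed

lemma finite_opp_profiles:
  fixes S :: "'p::finite \<Rightarrow> 't set"
  assumes "\<And>k. finite (S k)"
  shows "finite (opp_profiles S i t)"
proof (rule finite_subset)
  show "opp_profiles S i t \<subseteq> PiE UNIV (\<lambda>k. insert t (S k))"
    unfolding opp_profiles_def PiE_UNIV_domain by auto
  show "finite (PiE UNIV (\<lambda>k. insert t (S k)))"
    using assms by (intro finite_PiE) auto
qed

lemma opp_weight_nonneg:
  assumes "\<And>k x. 0 \<le> m k x"
  shows "0 \<le> opp_weight m i \<theta>"
  unfolding opp_weight_def using assms by (intro prod_nonneg) auto

lemma opp_weight_pos:
  fixes m :: "'p::finite \<Rightarrow> 't \<Rightarrow> real"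
  assumes "\<And>k x. 0 \<le> m k x" and "\<theta> \<in> opp_profiles (supp \<circ> m) i t"
  shows "0 < opp_weight m i \<theta>"
  unfolding opp_weight_def
proof (rule prod_pos)
  fix j
  assume "j \<in> UNIV - {i}"
  then have "m j (\<theta> j) \<noteq> 0"
    using assms(2) unfolding opp_profiles_def supp_def by auto
  then show "0 < m j (\<theta> j)" using assms(1)[of j "\<theta> j"] by linarith
qed

lemma avg_fit_mono_type:
  assumes "\<And>k x. 0 \<le> m k x"
    and "\<And>\<theta>. \<theta> \<in> opp_profiles (supp \<circ> m) i t \<Longrightarrow> EU Act (\<pi> i) (b \<theta>) \<le> EU Act (\<pi> i) (b (\<theta>(i := t')))"
  shows "avg_fit Act \<pi> m b i t \<le> avg_fit Act \<pi> m b i t'"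
  unfolding avg_fit_switch_type[where t = t and t' = t'] unfolding avg_fit_opp_profiles
  using assms(2) opp_weight_nonneg[of m, OF assms(1)] by (intro sum_mono mult_left_mono) auto

lemma avg_fit_eq_imp_pointwise_eq:
  fixes m :: "'p::finite \<Rightarrow> (('p \<Rightarrow> 'a) \<Rightarrow> real) \<Rightarrow> real"
  assumes "\<And>k. finite (supp (m k))" and "\<And>k x. 0 \<le> m k x"
    and le: "\<And>\<theta>. \<theta> \<in> opp_profiles (supp \<circ> m) i t \<Longrightarrow> EU Act (\<pi> i) (b \<theta>) \<le> EU Act (\<pi> i) (b (\<theta>(i := t')))"
    and eq: "avg_fit Act \<pi> m b i t = avg_fit Act \<pi> m b i t'"
    and \<theta>: "\<theta> \<in> opp_profiles (supp \<circ> m) i t"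
  shows "EU Act (\<pi> i) (b \<theta>) = EU Act (\<pi> i) (b (\<theta>(i := t')))"
proof -
  define d where "d \<theta> = opp_weight m i \<theta> * (EU Act (\<pi> i) (b (\<theta>(i := t'))) - EU Act (\<pi> i) (b \<theta>))" for \<theta>
  have d_nonneg: "\<forall>\<theta>\<in>opp_profiles (supp \<circ> m) i t. 0 \<le> d \<theta>"
    unfolding d_def using le opp_weight_nonneg[of m, OF assms(2)] by auto
  have "sum d (opp_profiles (supp \<circ> m) i t) = avg_fit Act \<pi> m b i t' - avg_fit Act \<pi> m b i t"
    unfolding d_def avg_fit_switch_type[where t = t and t' = t'] unfolding avg_fit_opp_profiles
    by (simp add: sum_subtractf right_diff_distrib)
  then have "sum d (opp_profiles (supp \<circ> m) i t) = 0" using eq by simp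
  moreover have "finite (opp_profiles (supp \<circ> m) i t)"
    using assms(1) by (intro finite_opp_profiles) simp
  ultimately have "d \<theta> = 0"
    using sum_nonneg_eq_0_iff d_nonneg \<theta> by blast
  then show ?thesis unfolding d_def using opp_weight_pos[of m, OF assms(2) \<theta>] by simp
qed

lemma type_distD:
  assumes "type_dist Act \<mu>"
  shows "finite (supp (\<mu> i))" and "supp (\<mu> i) \<noteq> {}" and "0 \<le> \<mu> i x"
proof -
  have "sum (\<mu> i) (supp (\<mu> i)) = 1" using assms unfolding type_dist_def by blast
  then show "supp (\<mu> i) \<noteq> {}" by auto
qed (use assms in \<open>auto simp: type_dist_def\<close>)

lemma post_entry_nonneg:
  assumes "type_dist Act \<mu>" and "\<forall>j\<in>J. 0 < eps j \<and> eps j < 1"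
  shows "0 \<le> post_entry \<mu> J mt eps k x"
  using assms type_distD(3)[OF assms(1), of k x] unfolding post_entry_def by auto

definition mutant_supp :: "('p \<Rightarrow> 't \<Rightarrow> real) \<Rightarrow> 'p set \<Rightarrow> ('p \<Rightarrow> 't) \<Rightarrow> 'p \<Rightarrow> 't set" where
  "mutant_supp \<mu> J mt k = (if k \<in> J then insert (mt k) (supp (\<mu> k)) else supp (\<mu> k))"

lemma supp_post_entry:
  assumes "\<forall>j\<in>J. 0 < eps j \<and> eps j < 1" and "\<forall>j\<in>J. mt j \<notin> supp (\<mu> j)"
  shows "supp (post_entry \<mu> J mt eps k) = mutant_supp \<mu> J mt k"
  using assms unfolding post_entry_def supp_def mutant_supp_def by (auto split: if_splits)

lemma type_dist_post_entry:
  assumes "type_dist Act \<mu>" and eps: "\<forall>j\<in>J. 0 < eps j \<and> eps j < 1"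
    and mt: "\<forall>j\<in>J. mt j \<in> Theta Act - supp (\<mu> j)"
  shows "type_dist Act (post_entry \<mu> J mt eps)"
  unfolding type_dist_def
proof (intro allI conjI)
  fix k
  have supp: "supp (post_entry \<mu> J mt eps k) =
      (if k \<in> J then insert (mt k) (supp (\<mu> k)) else supp (\<mu> k))"
    using supp_post_entry[OF eps] mt unfolding mutant_supp_def by blast
  show "finite (supp (post_entry \<mu> J mt eps k))"
    unfolding supp using type_distD(1)[OF assms(1)] by simp
  show "supp (post_entry \<mu> J mt eps k) \<subseteq> Theta Act"
    unfolding supp using assms(1) mt unfolding type_dist_def by auto
  show "0 \<le> post_entry \<mu> J mt eps k x" for x
    by (rule post_entry_nonneg[OF assms(1) eps])
  have sum1: "sum (\<mu> k) (supp (\<mu> k)) = 1"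
    using assms(1) unfolding type_dist_def by blast
  show "sum (post_entry \<mu> J mt eps k) (supp (post_entry \<mu> J mt eps k)) = 1"
  proof (cases "k \<in> J")
    case True
    have fresh: "mt k \<notin> supp (\<mu> k)" and "\<mu> k (mt k) = 0"
      using mt True unfolding supp_def by auto
    have "sum (post_entry \<mu> J mt eps k) (supp (\<mu> k)) = (1 - eps k) * sum (\<mu> k) (supp (\<mu> k))"
      unfolding sum_distrib_left using fresh True
      by (intro sum.cong) (auto simp: post_entry_def)
    with True fresh \<open>\<mu> k (mt k) = 0\<close> show ?thesis
      unfolding supp using sum1 type_distD(1)[OF assms(1)]
      by (simp add: post_entry_def)
  next
    case False
    then show ?thesis unfolding supp using sum1 by (simp add: post_entry_def)
  qed
qed

lemma constant_on_supp_prof_if_update_invariant: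
  fixes f :: "('p::finite \<Rightarrow> 't) \<Rightarrow> 'c"
  assumes step: "\<And>\<theta> j t. \<theta> \<in> supp_prof \<mu> \<Longrightarrow> t \<in> supp (\<mu> j) \<Longrightarrow> f (\<theta>(j := t)) = f \<theta>"
    and "\<theta> \<in> supp_prof \<mu>" and \<theta>': "\<theta>' \<in> supp_prof \<mu>"
  shows "f \<theta> = f \<theta>'"
proof -
  have "\<forall>\<theta>\<in>supp_prof \<mu>. {k. \<theta> k \<noteq> \<theta>' k} \<subseteq> D \<longrightarrow> f \<theta> = f \<theta>'" if "finite D" for D
    using that
  proof (induction D rule: finite_induct)
    case empty
    then show ?case by (auto simp: fun_eq_iff)
  next
    case (insert k D)
    show ?case
    proof (intro ballI impI)
      fix \<theta>
      assume \<theta>: "\<theta> \<in> supp_prof \<mu>" and diff: "{k'. \<theta> k' \<noteq> \<theta>' k'} \<subseteq> insert k D"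
      have "\<theta>(k := \<theta>' k) \<in> supp_prof \<mu>"
        using \<theta> \<theta>' unfolding supp_prof_def by auto
      moreover have "{k'. (\<theta>(k := \<theta>' k)) k' \<noteq> \<theta>' k'} \<subseteq> D"
        using diff by auto
      ultimately have "f (\<theta>(k := \<theta>' k)) = f \<theta>'"
        using insert.IH by blast
      moreover have "f (\<theta>(k := \<theta>' k)) = f \<theta>"
        using step \<theta> \<theta>' unfolding supp_prof_def by blast
      ultimately show "f \<theta> = f \<theta>'" by simp
    qed
  qed
  from this[of UNIV] assms(2) show ?thesis by simp
qed

locale stable_configuration =
  fixes Act :: "'p::finite \<Rightarrow> 'a set"
    and \<pi> :: "'p \<Rightarrow> ('p \<Rightarrow> 'a) \<Rightarrow> real"
    and \<mu> :: "'p \<Rightarrow> (('p \<Rightarrow> 'a) \<Rightarrow> real) \<Rightarrow> real"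
    and b :: "('p \<Rightarrow> ('p \<Rightarrow> 'a) \<Rightarrow> real) \<Rightarrow> 'p \<Rightarrow> 'a \<Rightarrow> real"
  assumes finite_Act: "\<And>i. finite (Act i)"
    and Act_nonempty: "\<And>i. Act i \<noteq> {}"
    and type_dist: "type_dist Act \<mu>"
    and equilibrium: "b \<in> B1 Act \<mu>"
    and stable: "stable Act \<pi> \<mu> b"
begin

lemma fresh_mutant:
  obtains m where "m \<in> Theta Act - supp (\<mu> j)" and "\<exists>c. m = const_type Act c"
proof -
  obtain c where "const_type Act c \<notin> supp (\<mu> j)"
    using fresh_const_type[of Act "supp (\<mu> j)"] Act_nonempty type_distD(1)[OF type_dist]
    by blast
  then show ?thesis using that const_type_in_Theta by blast
qed

lemma mutant_entry:
  assumes "J \<noteq> {}" and mt: "\<forall>j\<in>J. mt j \<in> Theta Act - supp (\<mu> j)"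
  obtains eps where "\<forall>j\<in>J. 0 < eps j \<and> eps j < 1"
    and "\<And>b'. b' \<in> B1_focal Act (post_entry \<mu> J mt eps) \<mu> b \<Longrightarrow>
      \<forall>j\<in>J. \<exists>t\<in>supp (\<mu> j). avg_fit Act \<pi> (post_entry \<mu> J mt eps) b' j t
                            \<le> avg_fit Act \<pi> (post_entry \<mu> J mt eps) b' j (mt j) \<Longrightarrow>
      balanced Act \<pi> (post_entry \<mu> J mt eps) b'"
proof -
  obtain eb where eb: "0 < eb" "eb < 1" and resist:
    "\<forall>eps. (\<forall>j\<in>J. 0 < eps j \<and> eps j < 1 \<and> eps j < eb) \<longrightarrow>
      (\<forall>b'\<in>B1_focal Act (post_entry \<mu> J mt eps) \<mu> b.
        (\<exists>j\<in>J. \<forall>t\<in>supp (\<mu> j). avg_fit Act \<pi> (post_entry \<mu> J mt eps) b' j t >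
                               avg_fit Act \<pi> (post_entry \<mu> J mt eps) b' j (mt j))
        \<or> balanced Act \<pi> (post_entry \<mu> J mt eps) b')"
    using stable[unfolded stable_def, THEN conjunct2, rule_format, OF assms(1) bspec[OF mt]]
    by blast
  have "\<forall>j\<in>J. 0 < eb / 2 \<and> eb / 2 < 1 \<and> eb / 2 < eb" using eb by simp
  with resist show ?thesis
    by (intro that[of "\<lambda>_. eb / 2"]) (simp, meson not_le)
qed

lemma redirected_focal:
  assumes redirect: "\<And>\<theta>. \<theta> \<in> supp_prof \<mu>' \<Longrightarrow> r \<theta> \<in> supp_prof \<mu>"
    and mutants: "\<And>\<theta> k. \<theta> k \<noteq> r \<theta> k \<Longrightarrow> \<exists>c. \<theta> k = const_type Act c"
    and identity: "\<And>\<theta>. \<theta> \<in> supp_prof \<mu> \<Longrightarrow> r \<theta> = \<theta>"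
  shows "(\<lambda>\<theta>. b (r \<theta>)) \<in> B1_focal Act \<mu>' \<mu> b"
  unfolding B1_focal_def B1_def
proof (intro CollectI conjI ballI)
  fix \<theta>
  assume "\<theta> \<in> supp_prof \<mu>'"
  then have "is_NE Act (r \<theta>) (b (r \<theta>))"
    using redirect equilibrium unfolding B1_def by blast
  then show "is_NE Act \<theta> (b (r \<theta>))"
    using is_NE_replace_by_const_types[where \<theta> = "r \<theta>" and \<theta>' = \<theta>] finite_Act mutants by blast
qed (simp add: identity)

text \<open>\<open>r\<close> maps a post-entry type profile to the incumbent profile whose equilibrium is played
  there.\<close>

definition mutant_no_worse ::
    "(('p \<Rightarrow> ('p \<Rightarrow> 'a) \<Rightarrow> real) \<Rightarrow> 'p \<Rightarrow> ('p \<Rightarrow> 'a) \<Rightarrow> real) \<Rightarrow> 'p set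
      \<Rightarrow> ('p \<Rightarrow> ('p \<Rightarrow> 'a) \<Rightarrow> real) \<Rightarrow> 'p \<Rightarrow> (('p \<Rightarrow> 'a) \<Rightarrow> real) \<Rightarrow> bool" where
  "mutant_no_worse r J mt j t \<longleftrightarrow>
    (\<forall>\<theta>\<in>opp_profiles (mutant_supp \<mu> J mt) j t.
      EU Act (\<pi> j) (b (r \<theta>)) \<le> EU Act (\<pi> j) (b (r (\<theta>(j := mt j)))))"

lemma mutant_test:
  assumes "J \<noteq> {}" and mt: "\<forall>j\<in>J. mt j \<in> Theta Act - supp (\<mu> j)"
    and mt_const: "\<forall>j\<in>J. \<exists>c. mt j = const_type Act c"
    and redirect: "\<And>\<theta>. \<forall>k. \<theta> k \<in> mutant_supp \<mu> J mt k \<Longrightarrow> r \<theta> \<in> supp_prof \<mu>"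
    and redirect_mutants: "\<And>\<theta> k. \<theta> k \<noteq> r \<theta> k \<Longrightarrow> k \<in> J \<and> \<theta> k = mt k"
    and no_worse: "\<And>k. k \<in> J \<Longrightarrow> \<exists>t\<in>supp (\<mu> k). mutant_no_worse r J mt k t"
    and j: "j \<in> J" and t: "t \<in> supp (\<mu> j)" and no_worse_t: "mutant_no_worse r J mt j t"
    and \<theta>: "\<theta> \<in> opp_profiles (mutant_supp \<mu> J mt) j t"
  shows "EU Act (\<pi> j) (b (r \<theta>)) = EU Act (\<pi> j) (b (r (\<theta>(j := mt j))))"
proof -
  obtain eps where eps: "\<forall>j\<in>J. 0 < eps j \<and> eps j < 1"
    and balance: "\<And>b'. b' \<in> B1_focal Act (post_entry \<mu> J mt eps) \<mu> b \<Longrightarrow>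
      \<forall>j\<in>J. \<exists>t\<in>supp (\<mu> j). avg_fit Act \<pi> (post_entry \<mu> J mt eps) b' j t
                            \<le> avg_fit Act \<pi> (post_entry \<mu> J mt eps) b' j (mt j) \<Longrightarrow>
      balanced Act \<pi> (post_entry \<mu> J mt eps) b'"
    using mutant_entry[OF assms(1) mt] by blast
  define \<mu>' where "\<mu>' = post_entry \<mu> J mt eps"
  have dist: "type_dist Act \<mu>'"
    unfolding \<mu>'_def by (rule type_dist_post_entry[OF type_dist eps mt])
  have supp': "supp (\<mu>' k) = mutant_supp \<mu> J mt k" for k
    using supp_post_entry[OF eps] mt unfolding \<mu>'_def by blast
  then have opp_eq: "supp \<circ> \<mu>' = mutant_supp \<mu> J mt" by auto
  have "(\<lambda>\<theta>. b (r \<theta>)) \<in> B1_focal Act \<mu>' \<mu> b"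
  proof (rule redirected_focal)
    show "r \<theta> \<in> supp_prof \<mu>" if "\<theta> \<in> supp_prof \<mu>'" for \<theta>
      by (rule redirect) (use that supp' in \<open>auto simp: supp_prof_def\<close>)
    show "\<exists>c. \<theta> k = const_type Act c" if "\<theta> k \<noteq> r \<theta> k" for \<theta> k
      using redirect_mutants[OF that] mt_const by auto
    show "r \<theta> = \<theta>" if "\<theta> \<in> supp_prof \<mu>" for \<theta>
    proof
      show "r \<theta> k = \<theta> k" for k
      proof (rule ccontr)
        assume "r \<theta> k \<noteq> \<theta> k"
        then have "k \<in> J" and "\<theta> k = mt k" using redirect_mutants[of \<theta> k] by auto
        moreover have "\<theta> k \<in> supp (\<mu> k)" using that unfolding supp_prof_def by blast
        ultimately show False using mt by auto
      qed
    qed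
  qed
  moreover have "avg_fit Act \<pi> \<mu>' (\<lambda>\<theta>. b (r \<theta>)) k t \<le> avg_fit Act \<pi> \<mu>' (\<lambda>\<theta>. b (r \<theta>)) k (mt k)"
    if "mutant_no_worse r J mt k t" for k t
    using that unfolding mutant_no_worse_def opp_eq[symmetric]
    by (intro avg_fit_mono_type type_distD(3)[OF dist]) blast
  ultimately have "balanced Act \<pi> \<mu>' (\<lambda>\<theta>. b (r \<theta>))"
    using balance no_worse unfolding \<mu>'_def by blast
  moreover have "t \<in> supp (\<mu>' j)" and "mt j \<in> supp (\<mu>' j)"
    using j t unfolding supp' mutant_supp_def by auto
  ultimately have "avg_fit Act \<pi> \<mu>' (\<lambda>\<theta>. b (r \<theta>)) j t = avg_fit Act \<pi> \<mu>' (\<lambda>\<theta>. b (r \<theta>)) j (mt j)"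
    unfolding balanced_def by blast
  then show ?thesis
    using no_worse_t \<theta> unfolding mutant_no_worse_def opp_eq[symmetric]
    by (intro avg_fit_eq_imp_pointwise_eq[where m = \<mu>' and b = "\<lambda>\<theta>. b (r \<theta>)",
          OF type_distD(1)[OF dist] type_distD(3)[OF dist]]) auto
qed

definition best_reply :: "'p \<Rightarrow> 'p \<Rightarrow> ('p \<Rightarrow> ('p \<Rightarrow> 'a) \<Rightarrow> real) \<Rightarrow> ('p \<Rightarrow> 'a) \<Rightarrow> real" where
  "best_reply i j \<theta> = (SOME t. t \<in> supp (\<mu> j) \<and>
     (\<forall>t'\<in>supp (\<mu> j). EU Act (\<pi> i) (b (\<theta>(j := t'))) \<le> EU Act (\<pi> i) (b (\<theta>(j := t)))))"

lemma best_reply: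
  "best_reply i j \<theta> \<in> supp (\<mu> j)"
  "t \<in> supp (\<mu> j) \<Longrightarrow> EU Act (\<pi> i) (b (\<theta>(j := t))) \<le> EU Act (\<pi> i) (b (\<theta>(j := best_reply i j \<theta>)))"
proof -
  let ?f = "\<lambda>t. EU Act (\<pi> i) (b (\<theta>(j := t)))"
  have fin: "finite (supp (\<mu> j))" and ne: "supp (\<mu> j) \<noteq> {}"
    using type_distD[OF type_dist] by auto
  have "Max (?f ` supp (\<mu> j)) \<in> ?f ` supp (\<mu> j)"
    using fin ne by simp
  then obtain t\<^sub>0 where "t\<^sub>0 \<in> supp (\<mu> j)" "?f t\<^sub>0 = Max (?f ` supp (\<mu> j))"
    by auto
  then have "\<exists>t. t \<in> supp (\<mu> j) \<and> (\<forall>t'\<in>supp (\<mu> j). ?f t' \<le> ?f t)"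
    using fin by auto
  from someI_ex[OF this] show "best_reply i j \<theta> \<in> supp (\<mu> j)"
    and "t \<in> supp (\<mu> j) \<Longrightarrow> ?f t \<le> ?f (best_reply i j \<theta>)"
    unfolding best_reply_def by auto
qed

lemma best_reply_upd [simp]: "best_reply i j (\<theta>(j := t)) = best_reply i j \<theta>"
  unfolding best_reply_def by simp

lemma own_payoff_le:
  assumes \<theta>: "\<theta> \<in> supp_prof \<mu>" and t: "t \<in> supp (\<mu> j)"
  shows "EU Act (\<pi> j) (b (\<theta>(j := t))) \<le> EU Act (\<pi> j) (b \<theta>)"
proof -
  obtain m where m: "m \<in> Theta Act - supp (\<mu> j)" and m_const: "\<exists>c. m = const_type Act c"
    by (rule fresh_mutant)
  define r where "r \<theta>' = (if \<theta>' j = m then \<theta>'(j := best_reply j j \<theta>') else \<theta>')" for \<theta>'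
  have no_worse: "mutant_no_worse r {j} (\<lambda>_. m) j s" if "s \<in> supp (\<mu> j)" for s
    unfolding mutant_no_worse_def
  proof
    fix \<theta>'
    assume "\<theta>' \<in> opp_profiles (mutant_supp \<mu> {j} (\<lambda>_. m)) j s"
    then have "\<theta>' j = s" and "s \<noteq> m" using that m unfolding opp_profiles_def by auto
    then show "EU Act (\<pi> j) (b (r \<theta>')) \<le> EU Act (\<pi> j) (b (r (\<theta>'(j := m))))"
      using best_reply(2)[OF that, of j \<theta>'] fun_upd_idem[of \<theta>' j s] unfolding r_def by simp
  qed
  have \<theta>j: "\<theta> j \<in> supp (\<mu> j)" using \<theta> unfolding supp_prof_def by auto
  have "EU Act (\<pi> j) (b (r \<theta>)) = EU Act (\<pi> j) (b (r (\<theta>(j := m))))"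
  proof (rule mutant_test[where J = "{j}" and mt = "\<lambda>_. m" and j = j and t = "\<theta> j", simplified])
    show "r \<theta>' \<in> supp_prof \<mu>" if "\<forall>k. \<theta>' k \<in> mutant_supp \<mu> {j} (\<lambda>_. m) k" for \<theta>'
      using that best_reply(1)[of j j \<theta>'] unfolding r_def supp_prof_def mutant_supp_def
      by (auto split: if_splits)
    show "k = j \<and> \<theta>' k = m" if "\<theta>' k \<noteq> r \<theta>' k" for \<theta>' k
      using that unfolding r_def by (auto split: if_splits)
    show "\<theta> \<in> opp_profiles (mutant_supp \<mu> {j} (\<lambda>_. m)) j (\<theta> j)"
      using \<theta> unfolding opp_profiles_def supp_prof_def mutant_supp_def by auto
  qed (use m m_const no_worse \<theta>j in auto)
  moreover have "r \<theta> = \<theta>" using \<theta>j m unfolding r_def by auto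
  ultimately show ?thesis
    using best_reply(2)[OF t, of j \<theta>] unfolding r_def by simp
qed

lemma own_payoff_eq:
  assumes "\<theta> \<in> supp_prof \<mu>" and "t \<in> supp (\<mu> j)"
  shows "EU Act (\<pi> j) (b (\<theta>(j := t))) = EU Act (\<pi> j) (b \<theta>)"
proof -
  have "\<theta>(j := t) \<in> supp_prof \<mu>" and "\<theta> j \<in> supp (\<mu> j)"
    using assms unfolding supp_prof_def by auto
  from own_payoff_le[OF this] own_payoff_le[OF assms] show ?thesis by simp
qed

lemma other_payoff_le:
  assumes \<theta>: "\<theta> \<in> supp_prof \<mu>" and t: "t \<in> supp (\<mu> j)" and "i \<noteq> j"
  shows "EU Act (\<pi> i) (b \<theta>) \<le> EU Act (\<pi> i) (b (\<theta>(j := t)))"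
proof -
  obtain mi where mi: "mi \<in> Theta Act - supp (\<mu> i)" and mi_const: "\<exists>c. mi = const_type Act c"
    by (rule fresh_mutant)
  obtain mj where mj: "mj \<in> Theta Act - supp (\<mu> j)" and mj_const: "\<exists>c. mj = const_type Act c"
    by (rule fresh_mutant)
  define mt where "mt k = (if k = i then mi else mj)" for k
  have mt_i: "mt i = mi" and mt_j: "mt j = mj" using \<open>i \<noteq> j\<close> unfolding mt_def by auto
  have msupp: "mutant_supp \<mu> {i, j} mt k = (if k = i then insert mi (supp (\<mu> k))
      else if k = j then insert mj (supp (\<mu> k)) else supp (\<mu> k))" for k
    unfolding mutant_supp_def mt_def by simp
  define s where "s = \<theta> i"
  have s: "s \<in> supp (\<mu> i)" using \<theta> unfolding s_def supp_prof_def by auto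
  define r where "r \<theta>' =
    (if \<theta>' i = mi \<and> \<theta>' j = mj then \<theta>'(i := s, j := best_reply i j (\<theta>'(i := s)))
     else if \<theta>' i = mi then \<theta>'(i := s)
     else if \<theta>' j = mj then \<theta>'(j := t)
     else \<theta>')" for \<theta>'
  have no_worse_i: "mutant_no_worse r {i, j} mt i s"
    unfolding mutant_no_worse_def mt_i
  proof
    fix \<theta>'
    assume "\<theta>' \<in> opp_profiles (mutant_supp \<mu> {i, j} mt) i s"
    then have "\<theta>' i = s" unfolding opp_profiles_def by simp
    moreover have "s \<noteq> mi" using s mi by auto
    ultimately have "\<theta>' i \<noteq> mi" and "\<theta>'(i := s) = \<theta>'" by auto
    then show "EU Act (\<pi> i) (b (r \<theta>')) \<le> EU Act (\<pi> i) (b (r (\<theta>'(i := mi))))"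
      using best_reply(2)[OF t, of i \<theta>'] \<open>i \<noteq> j\<close> unfolding r_def by simp
  qed
  have no_worse_j: "mutant_no_worse r {i, j} mt j t"
    unfolding mutant_no_worse_def mt_j
  proof
    fix \<theta>'
    assume \<theta>': "\<theta>' \<in> opp_profiles (mutant_supp \<mu> {i, j} mt) j t"
    then have "\<theta>' j = t" and "t \<noteq> mj" using t mj unfolding opp_profiles_def by auto
    show "EU Act (\<pi> j) (b (r \<theta>')) \<le> EU Act (\<pi> j) (b (r (\<theta>'(j := mj))))"
    proof (cases "\<theta>' i = mi")
      case True
      have "(\<theta>'(i := s)) k \<in> supp (\<mu> k)" for k
        using \<theta>' s t \<open>i \<noteq> j\<close> unfolding opp_profiles_def msupp
        by (cases "k = i"; cases "k = j") auto
      then have "\<theta>'(i := s) \<in> supp_prof \<mu>" unfolding supp_prof_def by blast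
      from own_payoff_eq[OF this best_reply(1)] show ?thesis
        using True \<open>\<theta>' j = t\<close> \<open>t \<noteq> mj\<close> \<open>i \<noteq> j\<close> unfolding r_def by (simp add: fun_upd_twist)
    next
      case False
      then show ?thesis
        using \<open>\<theta>' j = t\<close> \<open>t \<noteq> mj\<close> \<open>i \<noteq> j\<close> fun_upd_idem[of \<theta>' j t] unfolding r_def by simp
    qed
  qed
  have "EU Act (\<pi> i) (b (r (\<theta>(j := mj)))) = EU Act (\<pi> i) (b (r (\<theta>(j := mj, i := mi))))"
  proof (rule mutant_test[where J = "{i, j}" and mt = mt and j = i and t = s, unfolded mt_i])
    show "\<forall>k\<in>{i, j}. mt k \<in> Theta Act - supp (\<mu> k)"
      and "\<forall>k\<in>{i, j}. \<exists>c. mt k = const_type Act c"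
      using mi mj mi_const mj_const unfolding mt_def by auto
    show "r \<theta>' \<in> supp_prof \<mu>" if "\<forall>k. \<theta>' k \<in> mutant_supp \<mu> {i, j} mt k" for \<theta>'
      using that s t best_reply(1) \<open>i \<noteq> j\<close> unfolding r_def supp_prof_def msupp
      by (auto split: if_splits)
    show "k \<in> {i, j} \<and> \<theta>' k = mt k" if "\<theta>' k \<noteq> r \<theta>' k" for \<theta>' k
      using that \<open>i \<noteq> j\<close> unfolding r_def mt_def by (auto split: if_splits)
    show "\<theta>(j := mj) \<in> opp_profiles (mutant_supp \<mu> {i, j} mt) i s"
      using \<theta> \<open>i \<noteq> j\<close> unfolding opp_profiles_def supp_prof_def msupp s_def by auto
  qed (use no_worse_i no_worse_j s t in auto)
  moreover have "r (\<theta>(j := mj)) = \<theta>(j := t)"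
    using s mi \<open>i \<noteq> j\<close> unfolding r_def s_def by auto
  moreover have "r (\<theta>(j := mj, i := mi)) = \<theta>(j := best_reply i j \<theta>)"
  proof -
    have "\<theta>(j := mj, i := \<theta> i) = \<theta>(j := mj)" using \<open>i \<noteq> j\<close> by (auto simp: fun_eq_iff)
    then show ?thesis using \<open>i \<noteq> j\<close> unfolding r_def s_def by (auto simp: fun_upd_twist)
  qed
  moreover have "\<theta> j \<in> supp (\<mu> j)" using \<theta> unfolding supp_prof_def by auto
  ultimately show ?thesis using best_reply(2)[of "\<theta> j" j i \<theta>] by simp
qed

lemma payoff_update_invariant:
  assumes "\<theta> \<in> supp_prof \<mu>" and "t \<in> supp (\<mu> j)"
  shows "EU Act (\<pi> i) (b (\<theta>(j := t))) = EU Act (\<pi> i) (b \<theta>)"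
proof (cases "i = j")
  case True
  then show ?thesis using own_payoff_eq[OF assms] by simp
next
  case False
  have "\<theta>(j := t) \<in> supp_prof \<mu>" and "\<theta> j \<in> supp (\<mu> j)"
    using assms unfolding supp_prof_def by auto
  from other_payoff_le[OF this False] other_payoff_le[OF assms False] show ?thesis by simp
qed

end

theorem mainTheorem2:
  fixes Act :: "'p::finite \<Rightarrow> 'a set"
    and \<pi> :: "'p \<Rightarrow> ('p \<Rightarrow> 'a) \<Rightarrow> real"
    and \<mu> :: "'p \<Rightarrow> (('p \<Rightarrow> 'a) \<Rightarrow> real) \<Rightarrow> real"
    and b :: "('p \<Rightarrow> ('p \<Rightarrow> 'a) \<Rightarrow> real) \<Rightarrow> 'p \<Rightarrow> 'a \<Rightarrow> real"
  assumes "\<forall>i. finite (Act i) \<and> Act i \<noteq> {}"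
    and "type_dist Act \<mu>"
    and "b \<in> B1 Act \<mu>"
    and "stable Act \<pi> \<mu> b"
    and "\<theta> \<in> supp_prof \<mu>" and "\<theta>' \<in> supp_prof \<mu>"
  shows "\<forall>i. EU Act (\<pi> i) (b \<theta>) = EU Act (\<pi> i) (b \<theta>')"
proof
  fix i
  interpret stable_configuration Act \<pi> \<mu> b
    using assms(1-4) by unfold_locales auto
  show "EU Act (\<pi> i) (b \<theta>) = EU Act (\<pi> i) (b \<theta>')"
    using payoff_update_invariant assms(5,6)
    by (rule constant_on_supp_prof_if_update_invariant[where f = "\<lambda>\<theta>. EU Act (\<pi> i) (b \<theta>)"])
qed

end
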